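(* Assume (A1)–(A4) and the latent index model (LI) below. Then $h_\ell(u)\ge0$ for all $\ell=1,\dots,L$ and all $u\in[0,1]$.
   Context: Observe i.i.d. $(Y_i,D_i,\mathbf Z_i)$, $D_i\in\{0,1\}$, $\mathbf Z_i=(Z_{1i},\dots,Z_{Li})'\in\{0,1\}^L$, $L\ge2$; potential outcomes $Y_i(0),Y_i(1)$ and compliance type $D_i(\cdot):\{0,1\}^L\to\{0,1\}$ with $D_i=D_i(\mathbf Z_i)$. $p_\ell=P(Z_{\ell i}=1)$, $\pi_\ell=\mathbb E[D_i\mid Z_{\ell i}=1]-\mathbb E[D_i\mid Z_{\ell i}=0]$, $\Sigma_Z=\mathrm{Var}(\mathbf Z_i)$; $Z_{-\ell}$ is the vector of instruments other than $Z_\ell$. (LI): $D_i=\mathbf 1\{V(\mathbf Z_i)\ge U_i\}$ with $V$ measurable and $U_i\sim\mathrm{Uniform}(0,1)$ conditional on potential outcomes; $p(z)=P(D_i=1\mid\mathbf Z_i=z)=V(z)$ and $$h_\ell(u)=\frac{P(p(\mathbf Z_i)\ge u\mid Z_{\ell i}=1)-P(p(\mathbf Z_i)\ge u\mid Z_{\ell i}=0)}{\mathbb E[p(\mathbf Z_i)\mid Z_{\ell i}=1]-\mathbb E[p(\mathbf Z_i)\mid Z_{\ell i}=0]}.$$ Assumptions: (A1) $(Y_i(0),Y_i(1),D_i(\cdot))$ independent of $\mathbf Z_i$. (A2) $D_i(z)$ nondecreasing in each coordinate for every $i$. (A3) $p_\ell>0$, $\pi_\ell>0$ for all $\ell$;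 $\Sigma_Z$ positive definite. (A4) For each $\ell$, $\mathbb E[f(Z_{-\ell})\mid Z_\ell=1]\ge\mathbb E[f(Z_{-\ell})\mid Z_\ell=0]$ for every nondecreasing $f:\{0,1\}^{L-1}\to\mathbb R$. *)

theory Defs
  imports "HOL-Probability.Probability"
begin

text \<open>Conditioning on an event B of positive probability (Z is discrete, so all
conditioning events in the statement are of this form).\<close>

definition cond_prob :: "'a measure \<Rightarrow> 'a set \<Rightarrow> 'a set \<Rightarrow> real" where
  "cond_prob M A B = measure M (A \<inter> B) / measure M B"

definition cond_expect :: "'a measure \<Rightarrow> ('a \<Rightarrow> real) \<Rightarrow> 'a set \<Rightarrow> real" where
  "cond_expect M X B = (\<integral>\<omega>. X \<omega> * indicator B \<omega> \<partial>M) / measure M B"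

text \<open>Independence of two random variables with possibly different codomains
(the library's indep_var requires equal codomain types).\<close>
definition indep_rv :: "'a measure \<Rightarrow> 'b measure \<Rightarrow> ('a \<Rightarrow> 'b) \<Rightarrow> 'c measure \<Rightarrow> ('a \<Rightarrow> 'c) \<Rightarrow> bool" where
  "indep_rv M Ma X Mb Y \<longleftrightarrow>
     X \<in> measurable M Ma \<and> Y \<in> measurable M Mb \<and>
     (\<forall>A\<in>sets Ma. \<forall>B\<in>sets Mb.
        measure M (X -` A \<inter> Y -` B \<inter> space M) = measure M (X -` A \<inter> space M) * measure M (Y -` B \<inter> space M))"

definition treat :: "('a \<Rightarrow> ('l \<Rightarrow> bool) \<Rightarrow> bool) \<Rightarrow> ('a \<Rightarrow> 'l \<Rightarrow> bool) \<Rightarrow> 'a \<Rightarrow> real" where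
  "treat Dt Z \<omega> = of_bool (Dt \<omega> (Z \<omega>))"

definition inst_prob :: "'a measure \<Rightarrow> ('a \<Rightarrow> 'l \<Rightarrow> bool) \<Rightarrow> 'l \<Rightarrow> real" where
  "inst_prob M Z l = measure M {\<omega> \<in> space M. Z \<omega> l}"

definition first_stage :: "'a measure \<Rightarrow> ('a \<Rightarrow> ('l \<Rightarrow> bool) \<Rightarrow> bool) \<Rightarrow> ('a \<Rightarrow> 'l \<Rightarrow> bool) \<Rightarrow> 'l \<Rightarrow> real" where
  "first_stage M Dt Z l =
     cond_expect M (treat Dt Z) {\<omega> \<in> space M. Z \<omega> l}
   - cond_expect M (treat Dt Z) {\<omega> \<in> space M. \<not> Z \<omega> l}"

definition cov_Z :: "'a measure \<Rightarrow> ('a \<Rightarrow> 'l \<Rightarrow> bool) \<Rightarrow> 'l \<Rightarrow> 'l \<Rightarrow> real" where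
  "cov_Z M Z j k =
     (\<integral>\<omega>. of_bool (Z \<omega> j) * of_bool (Z \<omega> k) \<partial>M)
     - (\<integral>\<omega>. of_bool (Z \<omega> j) \<partial>M) * (\<integral>\<omega>. of_bool (Z \<omega> k) \<partial>M)"

definition pos_def_mat :: "('l::finite \<Rightarrow> 'l \<Rightarrow> real) \<Rightarrow> bool" where
  "pos_def_mat S \<longleftrightarrow> (\<forall>c::'l \<Rightarrow> real. (\<exists>j. c j \<noteq> 0) \<longrightarrow> (\<Sum>j\<in>UNIV. \<Sum>k\<in>UNIV. c j * S j k * c k) > 0)"

definition pscore :: "'a measure \<Rightarrow> ('a \<Rightarrow> ('l \<Rightarrow> bool) \<Rightarrow> bool) \<Rightarrow> ('a \<Rightarrow> 'l \<Rightarrow> bool) \<Rightarrow> ('l \<Rightarrow> bool) \<Rightarrow> real" where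
  "pscore M Dt Z z = cond_prob M {\<omega> \<in> space M. Dt \<omega> (Z \<omega>)} {\<omega> \<in> space M. Z \<omega> = z}"

definition h_weight :: "'a measure \<Rightarrow> ('a \<Rightarrow> ('l \<Rightarrow> bool) \<Rightarrow> bool) \<Rightarrow> ('a \<Rightarrow> 'l \<Rightarrow> bool) \<Rightarrow> 'l \<Rightarrow> real \<Rightarrow> real" where
  "h_weight M Dt Z l u =
     (cond_prob M {\<omega> \<in> space M. pscore M Dt Z (Z \<omega>) \<ge> u} {\<omega> \<in> space M. Z \<omega> l}
      - cond_prob M {\<omega> \<in> space M. pscore M Dt Z (Z \<omega>) \<ge> u} {\<omega> \<in> space M. \<not> Z \<omega> l})
   / (cond_expect M (\<lambda>\<omega>. pscore M Dt Z (Z \<omega>)) {\<omega> \<in> space M. Z \<omega> l}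
      - cond_expect M (\<lambda>\<omega>. pscore M Dt Z (Z \<omega>)) {\<omega> \<in> space M. \<not> Z \<omega> l})"

end

(*
  Under (LI) the propensity score is, on every atom of Z of positive probability, the
  clipped index W z = max 0 (min 1 (V z)), and W is monotone: if W z' < W z for z <= z',
  the uniform U falls into (W z', W z] with positive probability, and for such outcomes
  D(z) = 1 > 0 = D(z'), contradicting (A2). The numerator and the denominator of h_l(u)
  are then E[g(Z) | Z_l = 1] - E[g(Z) | Z_l = 0] for the monotone functions
  g = 1{W >= u} and g = W, and (A4) makes such differences nonnegative.
  A vanishing denominator gives h_l(u) = 0 because x / 0 = 0.
*)
theory Submission
  imports Defs
begin

lemma sets_Collect_count_space_rv:
  assumes "Z \<in> measurable M (count_space UNIV)"
  shows "{\<omega>\<in>space M. Q (Z \<omega>)} \<in> sets M"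
  using measurable_sets[OF assms, of "{z. Q z}"] by (simp add: vimage_def Int_def conj_commute)

lemma pscore_nonneg: "0 \<le> pscore M Dt Z z"
  by (simp add: pscore_def cond_prob_def)

context finite_measure
begin

lemma integral_indicator_finite_rv:
  fixes Z :: "'a \<Rightarrow> 'b::finite" and h :: "'b \<Rightarrow> real"
  assumes Zm: "Z \<in> measurable M (count_space UNIV)"
  shows "(\<integral>\<omega>. h (Z \<omega>) * indicator {\<omega>\<in>space M. Q (Z \<omega>)} \<omega> \<partial>M)
     = (\<Sum>z\<in>UNIV. (if Q z then h z else 0) * measure M {\<omega>\<in>space M. Z \<omega> = z})"
proof -
  have "(\<integral>\<omega>. h (Z \<omega>) * indicator {\<omega>\<in>space M. Q (Z \<omega>)} \<omega> \<partial>M)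
      = (\<integral>\<omega>. (\<Sum>z\<in>UNIV. (if Q z then h z else 0) * indicator {\<omega>\<in>space M. Z \<omega> = z} \<omega>) \<partial>M)"
  proof (rule Bochner_Integration.integral_cong)
    fix \<omega> assume "\<omega> \<in> space M"
    then have "(\<Sum>z\<in>UNIV. (if Q z then h z else 0) * indicator {\<omega>\<in>space M. Z \<omega> = z} \<omega>)
        = (\<Sum>z\<in>UNIV. if Z \<omega> = z then (if Q z then h z else 0) else 0)"
      by (intro sum.cong) (auto simp: indicator_def)
    with \<open>\<omega> \<in> space M\<close> show "h (Z \<omega>) * indicator {\<omega>\<in>space M. Q (Z \<omega>)} \<omega>
        = (\<Sum>z\<in>UNIV. (if Q z then h z else 0) * indicator {\<omega>\<in>space M. Z \<omega> = z} \<omega>)"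
      by (simp add: indicator_def)
  qed simp
  also have "\<dots> = (\<Sum>z\<in>UNIV. (if Q z then h z else 0) * measure M {\<omega>\<in>space M. Z \<omega> = z})"
    by (subst Bochner_Integration.integral_sum)
       (auto intro!: sum.cong sets_Collect_count_space_rv[OF Zm]
         simp: emeasure_eq_measure Int_absorb2[OF Collect_subset])
  finally show ?thesis .
qed

lemma cond_expect_finite_rv:
  fixes Z :: "'a \<Rightarrow> 'b::finite" and h :: "'b \<Rightarrow> real"
  assumes "Z \<in> measurable M (count_space UNIV)"
  shows "cond_expect M (\<lambda>\<omega>. h (Z \<omega>)) {\<omega>\<in>space M. Q (Z \<omega>)}
     = (\<Sum>z\<in>UNIV. (if Q z then h z else 0) * measure M {\<omega>\<in>space M. Z \<omega> = z})
        / measure M {\<omega>\<in>space M. Q (Z \<omega>)}"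
  unfolding cond_expect_def using integral_indicator_finite_rv[OF assms] by simp

lemma cond_expect_finite_rv_mono:
  fixes Z :: "'a \<Rightarrow> 'b::finite" and h g :: "'b \<Rightarrow> real"
  assumes Zm: "Z \<in> measurable M (count_space UNIV)"
    and le: "\<And>z. Q z \<Longrightarrow> measure M {\<omega>\<in>space M. Z \<omega> = z} > 0 \<Longrightarrow> h z \<le> g z"
  shows "cond_expect M (\<lambda>\<omega>. h (Z \<omega>)) {\<omega>\<in>space M. Q (Z \<omega>)}
       \<le> cond_expect M (\<lambda>\<omega>. g (Z \<omega>)) {\<omega>\<in>space M. Q (Z \<omega>)}"
  unfolding cond_expect_finite_rv[OF Zm]
proof (intro divide_right_mono sum_mono)
  fix z
  show "(if Q z then h z else 0) * measure M {\<omega>\<in>space M. Z \<omega> = z}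
      \<le> (if Q z then g z else 0) * measure M {\<omega>\<in>space M. Z \<omega> = z}"
    using le[of z] measure_nonneg[of M "{\<omega>\<in>space M. Z \<omega> = z}"]
    by (cases "measure M {\<omega>\<in>space M. Z \<omega> = z} = 0") (auto intro: mult_right_mono)
qed simp

lemma cond_expect_finite_rv_cong:
  fixes Z :: "'a \<Rightarrow> 'b::finite" and h g :: "'b \<Rightarrow> real"
  assumes "Z \<in> measurable M (count_space UNIV)"
    and "\<And>z. Q z \<Longrightarrow> measure M {\<omega>\<in>space M. Z \<omega> = z} > 0 \<Longrightarrow> h z = g z"
  shows "cond_expect M (\<lambda>\<omega>. h (Z \<omega>)) {\<omega>\<in>space M. Q (Z \<omega>)}
       = cond_expect M (\<lambda>\<omega>. g (Z \<omega>)) {\<omega>\<in>space M. Q (Z \<omega>)}"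
  using cond_expect_finite_rv_mono[of Z Q h g] cond_expect_finite_rv_mono[of Z Q g h] assms
  by (simp add: order_antisym)

lemma cond_prob_eq_cond_expect_of_bool:
  assumes "Z \<in> measurable M (count_space UNIV)"
  shows "cond_prob M {\<omega>\<in>space M. R (Z \<omega>)} {\<omega>\<in>space M. Q (Z \<omega>)}
     = cond_expect M (\<lambda>\<omega>. of_bool (R (Z \<omega>))) {\<omega>\<in>space M. Q (Z \<omega>)}"
proof -
  have "{\<omega>\<in>space M. R (Z \<omega>)} \<inter> {\<omega>\<in>space M. Q (Z \<omega>)}
      = {\<omega>\<in>space M. R (Z \<omega>) \<and> Q (Z \<omega>)} \<inter> space M"
    by auto
  moreover have "(\<integral>\<omega>. (indicator {\<omega>\<in>space M. R (Z \<omega>) \<and> Q (Z \<omega>)} \<omega> :: real) \<partial>M)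
      = (\<integral>\<omega>. of_bool (R (Z \<omega>)) * indicator {\<omega>\<in>space M. Q (Z \<omega>)} \<omega> \<partial>M)"
    by (rule Bochner_Integration.integral_cong) (auto simp: indicator_def)
  ultimately show ?thesis
    unfolding cond_prob_def cond_expect_def
    using sets_Collect_count_space_rv[OF assms, of "\<lambda>z. R z \<and> Q z"] by simp
qed

lemma cond_prob_le_1:
  assumes "B \<in> sets M"
  shows "cond_prob M A B \<le> 1"
  unfolding cond_prob_def
  using finite_measure_mono[OF Int_lower2 assms, of A] measure_nonneg[of M B]
  by (auto simp: divide_le_eq_1 less_le)

lemma pscore_le_1:
  assumes "Z \<in> measurable M (count_space UNIV)"
  shows "pscore M Dt Z z \<le> 1"
  unfolding pscore_def by (intro cond_prob_le_1 sets_Collect_count_space_rv[OF assms])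

text \<open>Freezing z_l at False turns g into a monotone function of the other instruments,
  to which (A4) applies; it equals g where z_l is false and lies below g where z_l is true.\<close>

lemma cond_expect_mono_fun_instrument:
  fixes Z :: "'a \<Rightarrow> 'l::finite \<Rightarrow> bool" and g :: "('l \<Rightarrow> bool) \<Rightarrow> real"
  assumes Zm: "Z \<in> measurable M (count_space UNIV)"
    and "mono g"
    and A4: "\<And>f :: ('l \<Rightarrow> bool) \<Rightarrow> real. mono f \<Longrightarrow> (\<forall>z b. f (z(l := b)) = f z) \<Longrightarrow>
               cond_expect M (\<lambda>\<omega>. f (Z \<omega>)) {\<omega> \<in> space M. \<not> Z \<omega> l}
                 \<le> cond_expect M (\<lambda>\<omega>. f (Z \<omega>)) {\<omega> \<in> space M. Z \<omega> l}"
  shows "cond_expect M (\<lambda>\<omega>. g (Z \<omega>)) {\<omega> \<in> space M. \<not> Z \<omega> l}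
       \<le> cond_expect M (\<lambda>\<omega>. g (Z \<omega>)) {\<omega> \<in> space M. Z \<omega> l}"
proof -
  define g0 where "g0 z = g (z(l := False))" for z
  have "mono g0"
    unfolding g0_def by (rule monoI, rule monoD[OF \<open>mono g\<close>]) (simp add: le_fun_def)
  have "cond_expect M (\<lambda>\<omega>. g (Z \<omega>)) {\<omega> \<in> space M. \<not> Z \<omega> l}
      = cond_expect M (\<lambda>\<omega>. g0 (Z \<omega>)) {\<omega> \<in> space M. \<not> Z \<omega> l}"
    by (rule cond_expect_finite_rv_cong[OF Zm]) (simp add: g0_def fun_upd_idem)
  also have "\<dots> \<le> cond_expect M (\<lambda>\<omega>. g0 (Z \<omega>)) {\<omega> \<in> space M. Z \<omega> l}"
    using A4[OF \<open>mono g0\<close>] by (simp add: g0_def)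
  also have "\<dots> \<le> cond_expect M (\<lambda>\<omega>. g (Z \<omega>)) {\<omega> \<in> space M. Z \<omega> l}"
    by (rule cond_expect_finite_rv_mono[OF Zm], unfold g0_def, rule monoD[OF \<open>mono g\<close>])
       (auto simp: le_fun_def)
  finally show ?thesis .
qed

lemma cond_expect_instrument_le_if_mono_on_atoms:
  fixes Z :: "'a \<Rightarrow> 'l::finite \<Rightarrow> bool" and g h :: "('l \<Rightarrow> bool) \<Rightarrow> real"
  assumes Zm: "Z \<in> measurable M (count_space UNIV)"
    and "mono g"
    and atoms: "\<And>z. measure M {\<omega>\<in>space M. Z \<omega> = z} > 0 \<Longrightarrow> h z = g z"
    and A4: "\<And>f :: ('l \<Rightarrow> bool) \<Rightarrow> real. mono f \<Longrightarrow> (\<forall>z b. f (z(l := b)) = f z) \<Longrightarrow>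
               cond_expect M (\<lambda>\<omega>. f (Z \<omega>)) {\<omega> \<in> space M. \<not> Z \<omega> l}
                 \<le> cond_expect M (\<lambda>\<omega>. f (Z \<omega>)) {\<omega> \<in> space M. Z \<omega> l}"
  shows "cond_expect M (\<lambda>\<omega>. h (Z \<omega>)) {\<omega> \<in> space M. \<not> Z \<omega> l}
       \<le> cond_expect M (\<lambda>\<omega>. h (Z \<omega>)) {\<omega> \<in> space M. Z \<omega> l}"
proof -
  have h_to_g: "cond_expect M (\<lambda>\<omega>. h (Z \<omega>)) {\<omega>\<in>space M. Q (Z \<omega>)}
      = cond_expect M (\<lambda>\<omega>. g (Z \<omega>)) {\<omega>\<in>space M. Q (Z \<omega>)}" for Q
    using atoms by (intro cond_expect_finite_rv_cong[OF Zm])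
  have "cond_expect M (\<lambda>\<omega>. g (Z \<omega>)) {\<omega> \<in> space M. \<not> Z \<omega> l}
      \<le> cond_expect M (\<lambda>\<omega>. g (Z \<omega>)) {\<omega> \<in> space M. Z \<omega> l}"
    using Zm \<open>mono g\<close> A4 by (rule cond_expect_mono_fun_instrument)
  then show ?thesis using h_to_g[of "\<lambda>z. z l"] h_to_g[of "\<lambda>z. \<not> z l"] by simp
qed

end

lemma uniform_exists_in_interval:
  assumes U: "distributed M lborel U (\<lambda>x. indicator {0..1} x)"
    and ab: "0 \<le> a" "a < b" "b \<le> (1::real)"
  shows "\<exists>\<omega>\<in>space M. a < U \<omega> \<and> U \<omega> \<le> b"
proof (rule ccontr)
  assume "\<not> ?thesis"
  then have "U -` {a<..b} \<inter> space M = {}" by auto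
  moreover have "U \<in> measurable M lborel" using U by (simp add: distributed_def)
  ultimately have "emeasure (distr M lborel U) {a<..b} = 0" by (simp add: emeasure_distr)
  then have "emeasure (density lborel (indicator {0..1})) {a<..b} = 0"
    using U by (simp add: distributed_def)
  moreover have "emeasure (density lborel (indicator {0..1})) {a<..b} = ennreal (b - a)"
  proof -
    have "emeasure (density lborel (indicator {0..1})) {a<..b}
        = (\<integral>\<^sup>+ x. indicator {0..1} x * indicator {a<..b} x \<partial>lborel)"
      by (rule emeasure_density) auto
    also have "\<dots> = (\<integral>\<^sup>+ x. indicator {a<..b} x \<partial>lborel)"
      using ab by (intro nn_integral_cong) (auto simp: indicator_def)
    finally show ?thesis using ab by simp
  qed
  ultimately show False using ab by simp
qed

lemma latent_index_clip_mono:
  fixes V :: "'b::order \<Rightarrow> real"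
  assumes U: "distributed M lborel U (\<lambda>x. indicator {0..1} x)"
    and mono_choice: "\<forall>\<omega>\<in>space M. mono (Dt \<omega>)"
    and latent_index: "\<forall>\<omega>\<in>space M. \<forall>z. Dt \<omega> z = (V z \<ge> U \<omega>)"
  shows "mono (\<lambda>z. max 0 (min 1 (V z)))"
proof (rule monoI, rule ccontr)
  fix z z' :: 'b
  assume "z \<le> z'" and "\<not> max 0 (min 1 (V z)) \<le> max 0 (min 1 (V z'))"
  then have "0 \<le> max 0 (V z')" "max 0 (V z') < min 1 (V z)" "min 1 (V z) \<le> 1" by auto
  then obtain \<omega> where \<omega>: "\<omega> \<in> space M" "max 0 (V z') < U \<omega>" "U \<omega> \<le> min 1 (V z)"
    using uniform_exists_in_interval[OF U] by blast
  then have "Dt \<omega> z" "\<not> Dt \<omega> z'" using latent_index by auto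
  with monoD[OF bspec[OF mono_choice \<omega>(1)] \<open>z \<le> z'\<close>] show False by auto
qed

theorem proposition14:
  fixes M :: "'a measure"
    and Z :: "'a \<Rightarrow> 'l::finite \<Rightarrow> bool"
    and Y0 Y1 U :: "'a \<Rightarrow> real"
    and Dt :: "'a \<Rightarrow> ('l \<Rightarrow> bool) \<Rightarrow> bool"
    and V :: "('l \<Rightarrow> bool) \<Rightarrow> real"
  assumes P: "prob_space M"
    and L2: "CARD('l) \<ge> 2"
    \<comment> \<open>(A1) independence of (Y(0), Y(1), D(.)) and Z\<close>
    and A1: "indep_rv M
               (borel \<Otimes>\<^sub>M (borel \<Otimes>\<^sub>M count_space UNIV)) (\<lambda>\<omega>. (Y0 \<omega>, Y1 \<omega>, Dt \<omega>))
               (count_space UNIV) Z"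
    \<comment> \<open>(A2) monotonicity\<close>
    and A2: "\<forall>\<omega>\<in>space M. mono (Dt \<omega>)"
    \<comment> \<open>(A3)\<close>
    and A3p: "\<forall>l. inst_prob M Z l > 0"
    and A3pi: "\<forall>l. first_stage M Dt Z l > 0"
    and A3S: "pos_def_mat (cov_Z M Z)"
    \<comment> \<open>(A4)\<close>
    and A4: "\<forall>l. \<forall>f :: ('l \<Rightarrow> bool) \<Rightarrow> real.
               mono f \<and> (\<forall>z b. f (z(l := b)) = f z) \<longrightarrow>
               cond_expect M (\<lambda>\<omega>. f (Z \<omega>)) {\<omega> \<in> space M. Z \<omega> l}
                 \<ge> cond_expect M (\<lambda>\<omega>. f (Z \<omega>)) {\<omega> \<in> space M. \<not> Z \<omega> l}"
    \<comment> \<open>(LI) latent index model\<close>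
    and LI_V: "V \<in> borel_measurable (count_space UNIV)"
    and LI_D: "\<forall>\<omega>\<in>space M. \<forall>z. Dt \<omega> z = (V z \<ge> U \<omega>)"
    and LI_U: "distributed M lborel U (\<lambda>x. indicator {0..1} x)"
    and LI_indep: "indep_rv M borel U (borel \<Otimes>\<^sub>M borel) (\<lambda>\<omega>. (Y0 \<omega>, Y1 \<omega>))"
    and LI_p: "\<forall>z. measure M {\<omega> \<in> space M. Z \<omega> = z} > 0 \<longrightarrow> pscore M Dt Z z = V z"
  shows "\<forall>l. \<forall>u::real. 0 \<le> u \<and> u \<le> 1 \<longrightarrow> h_weight M Dt Z l u \<ge> 0"
proof (intro allI impI)
  fix l :: 'l and u :: real
  interpret prob_space M by (rule P)
  have Zm: "Z \<in> measurable M (count_space UNIV)" using A1 by (simp add: indep_rv_def)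
  define W where "W z = max 0 (min 1 (V z))" for z
  have "mono W" unfolding W_def by (rule latent_index_clip_mono[OF LI_U A2 LI_D])
  have pscore_W: "pscore M Dt Z z = W z" if "measure M {\<omega>\<in>space M. Z \<omega> = z} > 0" for z
    using LI_p that pscore_nonneg[of M Dt Z z] pscore_le_1[OF Zm, of Dt z] unfolding W_def by auto
  have "mono (\<lambda>z. of_bool (u \<le> W z) :: real)"
    using \<open>mono W\<close> by (auto simp: mono_def intro: order_trans)
  have "cond_expect M (\<lambda>\<omega>. of_bool (u \<le> pscore M Dt Z (Z \<omega>))) {\<omega>\<in>space M. \<not> Z \<omega> l}
      \<le> cond_expect M (\<lambda>\<omega>. of_bool (u \<le> pscore M Dt Z (Z \<omega>))) {\<omega>\<in>space M. Z \<omega> l}"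
    by (rule cond_expect_instrument_le_if_mono_on_atoms[OF Zm \<open>mono (\<lambda>z. of_bool (u \<le> W z))\<close>,
          where h="\<lambda>z. of_bool (u \<le> pscore M Dt Z z)"])
       (use pscore_W A4 in auto)
  moreover have "cond_expect M (\<lambda>\<omega>. pscore M Dt Z (Z \<omega>)) {\<omega>\<in>space M. \<not> Z \<omega> l}
      \<le> cond_expect M (\<lambda>\<omega>. pscore M Dt Z (Z \<omega>)) {\<omega>\<in>space M. Z \<omega> l}"
    by (rule cond_expect_instrument_le_if_mono_on_atoms[OF Zm \<open>mono W\<close>, where h="pscore M Dt Z"])
       (use pscore_W A4 in auto)
  ultimately show "h_weight M Dt Z l u \<ge> 0"
    unfolding h_weight_def
    using cond_prob_eq_cond_expect_of_bool[OF Zm, where R="\<lambda>z. u \<le> pscore M Dt Z z" and Q="\<lambda>z. z l"]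
      cond_prob_eq_cond_expect_of_bool[OF Zm, where R="\<lambda>z. u \<le> pscore M Dt Z z" and Q="\<lambda>z. \<not> z l"]
    by (simp add: divide_nonneg_nonneg)
qed

end
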